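(* Let $K\ge L\ge T\ge 2$ be integers and let $(q,\boldsymbol{\alpha}^{(p)},\boldsymbol{\alpha}^{(s)},\boldsymbol{\beta}^{(p)},\boldsymbol{\beta}^{(s)})$ be the tuple $\mathrm{CAT}_x(K,L,T)$ described in the context, for any positive integer $x$ coprime to $q$. Then this tuple is a cyclic-addition degree table (CAT) for parameters $K,L,T$ with number of unique entries $$N=(K+1)(L+1)+(T-1)^2+\kappa+\lambda .$$
   Context: Construction $\mathrm{CAT}_x$: Let $K\ge L\ge T\ge 2$ be integers. Let $\kappa,\lambda$ be the smallest non-negative integers such that $K+1+\kappa$ and $L+1+\lambda$ are coprime to $T-1$. Put $K^\star=K+1+\kappa$, $L^\star=L+1+\lambda$, $\bar T=T-1$ and $q=K^\star L^\star+\bar T^2$. Let $x$ be a positive integer coprime to $q$ and let $y\in\{0,\dots,q-1\}$ be the (unique) integer with $x\bar T+yK^\star\equiv 0\pmod q$. Define vectors over $\mathbb{Z}_q$ (integers mod $q$): $\boldsymbol{\alpha}^{(p)}=(0,y,2y,\dots,(K-1)y)\bmod q\in\mathbb{Z}_q^K$, $\boldsymbol{\alpha}^{(s)}=(Ky,\;Ky+x,\;\dots,\;Ky+(T-1)x)\bmod q\in\mathbb{Z}_q^T$, $\boldsymbol{\beta}^{(p)}=(0,x,2x,\dots,(L-1)x)\bmod q\in\mathbb{Z}_q^L$, $\boldsymbol{\beta}^{(s)}=(-x,\;y-x,\;\dots,\;(T-1)y-x)\bmod q\in\mathbb{Z}_q^T$. Definition (CAT). For a positive integer $q$ and vectors $\boldsymbol{\alpha}^{(p)}\in\mathbb{Z}_q^K,\boldsymbol{\alpha}^{(s)}\in\mathbb{Z}_q^T,\boldsymbol{\beta}^{(p)}\in\mathbb{Z}_q^L,\boldsymbol{\beta}^{(s)}\in\mathbb{Z}_q^T$,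 write $\{\mathbf v\}$ for the set of entries of a vector $\mathbf v$ and let (all additions in $\mathbb{Z}_q$) $\mathcal{TL}=\{\boldsymbol{\alpha}^{(p)}\}+\{\boldsymbol{\beta}^{(p)}\}$, $\mathcal{TR}=\{\boldsymbol{\alpha}^{(p)}\}+\{\boldsymbol{\beta}^{(s)}\}$, $\mathcal{BL}=\{\boldsymbol{\alpha}^{(s)}\}+\{\boldsymbol{\beta}^{(p)}\}$, $\mathcal{BR}=\{\boldsymbol{\alpha}^{(s)}\}+\{\boldsymbol{\beta}^{(s)}\}$ (sumsets $\mathcal A+\mathcal B=\{a+b: a\in\mathcal A,b\in\mathcal B\}$), and let $\boldsymbol\gamma$ be the vector listing the elements of $\mathcal{TL}\cup\mathcal{TR}\cup\mathcal{BL}\cup\mathcal{BR}$ in ascending order (identifying $\mathbb{Z}_q$ with $\{0,\dots,q-1\}$). For a vector $\boldsymbol\rho$ of length $n$ of $q$-th roots of unity in a field and a vector $\boldsymbol\delta$ of length $m$ with entries in $\mathbb{Z}_q$, $\mathbf V(\boldsymbol\rho,\boldsymbol\delta)$ is the $n\times m$ matrix with $(i,j)$ entry $\rho_i^{\delta_j}$. The tuple $(q,\boldsymbol{\alpha}^{(p)},\boldsymbol{\alpha}^{(s)},\boldsymbol{\beta}^{(p)},\boldsymbol{\beta}^{(s)})$ is a cyclic-addition degree table for parameters $K,L,T$ with $N$ unique entries if: (I) $|\mathcal{TL}\cup\mathcal{TR}\cup\mathcal{BL}\cup\mathcal{BR}|=N$; (II) $|\mathcal{TL}|=KL$; (III)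 $\mathcal{TL}\cap\mathcal{TR}=\mathcal{TL}\cap\mathcal{BL}=\mathcal{TL}\cap\mathcal{BR}=\emptyset$; (IV) in every prime field $\mathbb{F}_p$ with $q\mid p-1$ there exist $N$ $q$-th roots of unity $\boldsymbol\rho=(\rho_1,\dots,\rho_N)$ such that (a) $\mathbf V(\boldsymbol\rho,\boldsymbol\gamma)$ is invertible and (b) all $T\times T$ submatrices of $\mathbf V(\boldsymbol\rho,\boldsymbol{\alpha}^{(s)})$ and of $\mathbf V(\boldsymbol\rho,\boldsymbol{\beta}^{(s)})$ are invertible. *)

theory Defs
  imports "Berlekamp_Zassenhaus.Finite_Field" "Jordan_Normal_Form.Matrix"
    "Jordan_Normal_Form.DL_Submatrix" "HOL-Number_Theory.Cong"
begin

(* Elements of Z_q are represented by naturals in {0..<q}; vectors by lists. *)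

definition sumset_mod :: "nat \<Rightarrow> nat set \<Rightarrow> nat set \<Rightarrow> nat set" where
  "sumset_mod q A B = {(a + b) mod q | a b. a \<in> A \<and> b \<in> B}"

definition cat_TL :: "nat \<Rightarrow> nat list \<Rightarrow> nat list \<Rightarrow> nat list \<Rightarrow> nat list \<Rightarrow> nat set" where
  "cat_TL q ap as bp bs = sumset_mod q (set ap) (set bp)"
definition cat_TR :: "nat \<Rightarrow> nat list \<Rightarrow> nat list \<Rightarrow> nat list \<Rightarrow> nat list \<Rightarrow> nat set" where
  "cat_TR q ap as bp bs = sumset_mod q (set ap) (set bs)"
definition cat_BL :: "nat \<Rightarrow> nat list \<Rightarrow> nat list \<Rightarrow> nat list \<Rightarrow> nat list \<Rightarrow> nat set" where
  "cat_BL q ap as bp bs = sumset_mod q (set as) (set bp)"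
definition cat_BR :: "nat \<Rightarrow> nat list \<Rightarrow> nat list \<Rightarrow> nat list \<Rightarrow> nat list \<Rightarrow> nat set" where
  "cat_BR q ap as bp bs = sumset_mod q (set as) (set bs)"

definition cat_all :: "nat \<Rightarrow> nat list \<Rightarrow> nat list \<Rightarrow> nat list \<Rightarrow> nat list \<Rightarrow> nat set" where
  "cat_all q ap as bp bs = cat_TL q ap as bp bs \<union> cat_TR q ap as bp bs
      \<union> cat_BL q ap as bp bs \<union> cat_BR q ap as bp bs"

definition cat_gamma :: "nat \<Rightarrow> nat list \<Rightarrow> nat list \<Rightarrow> nat list \<Rightarrow> nat list \<Rightarrow> nat list" where
  "cat_gamma q ap as bp bs = sorted_list_of_set (cat_all q ap as bp bs)"

definition vmat :: "'a::field list \<Rightarrow> nat list \<Rightarrow> 'a mat" where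
  "vmat \<rho> \<delta> = mat (length \<rho>) (length \<delta>) (\<lambda>(i, j). (\<rho> ! i) ^ (\<delta> ! j))"

definition all_TxT_invertible :: "nat \<Rightarrow> 'a::field mat \<Rightarrow> bool" where
  "all_TxT_invertible T A \<longleftrightarrow>
     (\<forall>I J. I \<subseteq> {0..<dim_row A} \<longrightarrow> J \<subseteq> {0..<dim_col A} \<longrightarrow> card I = T \<longrightarrow> card J = T
        \<longrightarrow> invertible_mat (submatrix A I J))"

(* Condition (IV) for one particular field 'a (instantiated with the prime field F_p) *)
definition cat_cond_IV :: "'a::field itself \<Rightarrow> nat \<Rightarrow> nat list \<Rightarrow> nat list \<Rightarrow> nat list \<Rightarrow> nat list
    \<Rightarrow> nat \<Rightarrow> nat \<Rightarrow> bool" where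
  "cat_cond_IV _ q ap as bp bs T N \<longleftrightarrow>
     (\<exists>\<rho> :: 'a list. length \<rho> = N \<and> (\<forall>r\<in>set \<rho>. r ^ q = 1)
        \<and> invertible_mat (vmat \<rho> (cat_gamma q ap as bp bs))
        \<and> all_TxT_invertible T (vmat \<rho> as)
        \<and> all_TxT_invertible T (vmat \<rho> bs))"

definition cat_cond_I_III :: "nat \<Rightarrow> nat list \<Rightarrow> nat list \<Rightarrow> nat list \<Rightarrow> nat list
    \<Rightarrow> nat \<Rightarrow> nat \<Rightarrow> nat \<Rightarrow> nat \<Rightarrow> bool" where
  "cat_cond_I_III q ap as bp bs K L T N \<longleftrightarrow>
     length ap = K \<and> length as = T \<and> length bp = L \<and> length bs = T
     \<and> (\<forall>v\<in>set ap \<union> set as \<union> set bp \<union> set bs. v < q)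
     \<and> card (cat_all q ap as bp bs) = N
     \<and> card (cat_TL q ap as bp bs) = K * L
     \<and> cat_TL q ap as bp bs \<inter> cat_TR q ap as bp bs = {}
     \<and> cat_TL q ap as bp bs \<inter> cat_BL q ap as bp bs = {}
     \<and> cat_TL q ap as bp bs \<inter> cat_BR q ap as bp bs = {}"

definition cat_kappa :: "nat \<Rightarrow> nat \<Rightarrow> nat" where
  "cat_kappa K T = (LEAST k. coprime (K + 1 + k) (T - 1))"
definition cat_lambda :: "nat \<Rightarrow> nat \<Rightarrow> nat" where
  "cat_lambda L T = (LEAST l. coprime (L + 1 + l) (T - 1))"
definition cat_Kstar :: "nat \<Rightarrow> nat \<Rightarrow> nat" where
  "cat_Kstar K T = K + 1 + cat_kappa K T"
definition cat_Lstar :: "nat \<Rightarrow> nat \<Rightarrow> nat" where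
  "cat_Lstar L T = L + 1 + cat_lambda L T"
definition cat_q :: "nat \<Rightarrow> nat \<Rightarrow> nat \<Rightarrow> nat" where
  "cat_q K L T = cat_Kstar K T * cat_Lstar L T + (T - 1)^2"
definition cat_y :: "nat \<Rightarrow> nat \<Rightarrow> nat \<Rightarrow> nat \<Rightarrow> nat" where
  "cat_y K L T x = (THE y. y < cat_q K L T \<and>
      [x * (T - 1) + y * cat_Kstar K T = 0] (mod cat_q K L T))"

definition cat_alpha_p :: "nat \<Rightarrow> nat \<Rightarrow> nat \<Rightarrow> nat \<Rightarrow> nat list" where
  "cat_alpha_p K L T x = map (\<lambda>i. (i * cat_y K L T x) mod cat_q K L T) [0..<K]"
definition cat_alpha_s :: "nat \<Rightarrow> nat \<Rightarrow> nat \<Rightarrow> nat \<Rightarrow> nat list" where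
  "cat_alpha_s K L T x = map (\<lambda>i. (K * cat_y K L T x + i * x) mod cat_q K L T) [0..<T]"
definition cat_beta_p :: "nat \<Rightarrow> nat \<Rightarrow> nat \<Rightarrow> nat \<Rightarrow> nat list" where
  "cat_beta_p K L T x = map (\<lambda>i. (i * x) mod cat_q K L T) [0..<L]"
definition cat_beta_s :: "nat \<Rightarrow> nat \<Rightarrow> nat \<Rightarrow> nat \<Rightarrow> nat list" where
  "cat_beta_s K L T x = map (\<lambda>i. nat ((int i * int (cat_y K L T x) - int x) mod int (cat_q K L T))) [0..<T]"

end

(*
  The map (a, b) |-> a y + b x mod q identifies Z_q with Z^2 modulo the lattice spanned by
  (Kstar, T - 1) and (-(T - 1), Lstar), of determinant q = Kstar Lstar + (T - 1)^2. In these
  coordinates the entries of alpha_p, alpha_s, beta_p and beta_s are images of segments, so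
  TL, TR, BL and BR are images of boxes. Two distinct points of the bounding box of these boxes
  have the same image only if they differ by a basis vector up to sign. Removing from BR the translates
  of points of TR and BL leaves N index points with pairwise distinct images, the K L points of
  TL among them, which gives (I)-(III).

  For (IV): F_p contains q distinct q-th roots of unity. Viewed as a polynomial in its last
  node, a generalized Vandermonde determinant with distinct exponents below q has degree below q
  and a nonzero coefficient, so the nodes can be chosen one by one to make it nonzero. The
  exponents in alpha_s and beta_s form arithmetic progressions with steps x and y coprime to q,
  so every T x T minor is a scaled Vandermonde determinant in the distinct nodes r^x resp. r^y.
*)

theory Submission
  imports Defs "HOL-Computational_Algebra.Polynomial" "Jordan_Normal_Form.Determinant"
    "HOL-Library.Set_Algebras" "HOL-Library.Product_Plus"
begin

section \<open>Modular arithmetic\<close>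

lemma coprime_Least_shift:
  fixes n t :: nat
  assumes "0 < t"
  shows "coprime (n + (LEAST k. coprime (n + k) t)) t" and "(LEAST k. coprime (n + k) t) < t"
proof -
  define k where "k = (1 + (t - 1) * n) mod t"
  have "[n + k = n + (1 + (t - 1) * n)] (mod t)"
    unfolding cong_def k_def by (rule mod_add_right_eq)
  also have "n + (1 + (t - 1) * n) = 1 + t * n"
    using assms by (cases t) auto
  also have "[1 + t * n = 1] (mod t)"
    unfolding cong_def by (rule mod_mult_self2)
  finally have "[1 = n + k] (mod t)"
    by (rule cong_sym)
  then have "coprime (n + k) t"
    by (rule cong_imp_coprime) simp
  then show "coprime (n + (LEAST k. coprime (n + k) t)) t"
    by (rule LeastI)
  have "k < t"
    using assms by (simp add: k_def)
  with \<open>coprime (n + k) t\<close> show "(LEAST k. coprime (n + k) t) < t"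
    by (meson Least_le le_less_trans)
qed

lemma power_cong_eq:
  fixes r :: "'a::monoid_mult"
  assumes "r ^ q = 1" and "[a = b] (mod q)"
  shows "r ^ a = r ^ b"
proof -
  have reduce: "r ^ c = r ^ (c mod q)" for c
  proof -
    have "r ^ c = r ^ (q * (c div q) + c mod q)"
      by simp
    also have "\<dots> = (r ^ q) ^ (c div q) * r ^ (c mod q)"
      by (simp only: power_add power_mult)
    finally show ?thesis
      using assms(1) by simp
  qed
  show ?thesis
    using reduce[of a] reduce[of b] assms(2) unfolding cong_def by simp
qed

lemma ex1_cong_solution:
  fixes a b q :: nat
  assumes "coprime a q" and "0 < q"
  shows "\<exists>!y. y < q \<and> [b + y * a = 0] (mod q)"
proof -
  obtain u where u: "[a * u = 1] (mod q)"
    using cong_solve_coprime_nat[OF assms(1)] by auto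
  define y where "y = ((q - 1) * b * u) mod q"
  have "[y = (q - 1) * b * u] (mod q)"
    unfolding y_def cong_def by simp
  then have "[b + y * a = b + (q - 1) * b * u * a] (mod q)"
    by (intro cong_add cong_mult cong_refl)
  also have "b + (q - 1) * b * u * a = b + (q - 1) * b * (a * u)"
    by (simp add: ac_simps)
  also have "[b + (q - 1) * b * (a * u) = b + (q - 1) * b * 1] (mod q)"
    by (intro cong_add cong_mult u cong_refl)
  also have "b + (q - 1) * b * 1 = q * b"
    using assms(2) by (cases q) auto
  also have "[q * b = 0] (mod q)"
    by (simp add: cong_def)
  finally have y: "[b + y * a = 0] (mod q)" .
  have y_less: "y < q"
    using assms(2) by (simp add: y_def)
  have "y' = y" if "y' < q" and "[b + y' * a = 0] (mod q)" for y'
  proof -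
    have "[b + y' * a = b + y * a] (mod q)"
      using that(2) y by (rule cong_trans[OF _ cong_sym])
    then have "[y' * a = y * a] (mod q)"
      by (simp add: cong_add_lcancel_nat)
    then have "[y' = y] (mod q)"
      using assms(1) by (simp add: cong_mult_rcancel_nat)
    then show ?thesis
      using that(1) y_less by (rule cong_less_modulus_unique_nat)
  qed
  then show ?thesis
    using y y_less by blast
qed

section \<open>Roots of unity and Vandermonde matrices\<close>

lemma poly_exists_nonroot:
  fixes p :: "'a::idom poly"
  assumes "p \<noteq> 0" and "degree p < card U"
  shows "\<exists>r\<in>U. poly p r \<noteq> 0"
proof (rule ccontr)
  assume "\<not> (\<exists>r\<in>U. poly p r \<noteq> 0)"
  then have "U \<subseteq> {r. poly p r = 0}"
    by auto
  then have "card U \<le> card {r. poly p r = 0}"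
    using poly_roots_finite[OF assms(1)] by (rule card_mono[rotated])
  also have "\<dots> \<le> degree p"
    using assms(1) by (rule card_poly_roots_bound)
  finally show False
    using assms(2) by simp
qed

lemma degree_less_if_coeffs_below:
  fixes p :: "'a::zero poly"
  assumes "p \<noteq> 0" and "\<And>k. coeff p k \<noteq> 0 \<Longrightarrow> k < m"
  shows "degree p < m"
  using assms by (simp add: leading_coeff_neq_0)

lemma card_nth_roots_le:
  fixes u :: "'a::idom"
  assumes "0 < d"
  shows "card {a. a ^ d = u} \<le> d"
proof -
  define p where "p = monom 1 d - [:u:]"
  have coeff_p: "coeff p k = (if k = d then 1 else if k = 0 then - u else 0)" for k
    unfolding p_def using assms by (auto simp: coeff_pCons split: nat.splits)
  have "p \<noteq> 0"
    using coeff_p[of d] by auto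
  have "degree p \<le> d"
    by (rule degree_le) (auto simp: coeff_p)
  have "{a. a ^ d = u} = {a. poly p a = 0}"
    by (auto simp: p_def poly_monom)
  also have "card \<dots> \<le> degree p"
    using \<open>p \<noteq> 0\<close> by (rule card_poly_roots_bound)
  finally show ?thesis
    using \<open>degree p \<le> d\<close> by simp
qed

lemma fermat_finite_field:
  fixes a :: "'a::{finite,field}"
  assumes "a \<noteq> 0"
  shows "a ^ (CARD('a) - 1) = 1"
proof -
  define S where "S = (UNIV :: 'a set) - {0}"
  have "bij_betw ((*) a) S S"
    unfolding S_def using assms
    by (intro bij_betwI[where g = "(*) (inverse a)"]) auto
  then have "\<Prod>S = (\<Prod>s\<in>S. a * s)"
    using prod.reindex_bij_betw[of "(*) a" S S "\<lambda>s. s"] by simp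
  also have "\<dots> = a ^ card S * \<Prod>S"
    by (simp add: prod.distrib)
  finally have "a ^ card S = 1"
    unfolding S_def by simp
  moreover have "card S = CARD('a) - 1"
    unfolding S_def by (simp add: card_Diff_subset)
  ultimately show ?thesis
    by simp
qed

lemma card_roots_of_unity_ge:
  assumes "0 < q" and "q dvd CARD('a::{finite,field}) - 1"
  shows "q \<le> card {u :: 'a. u ^ q = 1}"
proof -
  define U where "U = {u :: 'a. u ^ q = 1}"
  obtain d where d: "CARD('a) - 1 = q * d"
    using assms(2) by (elim dvdE)
  have "card {0, 1 :: 'a} \<le> CARD('a)"
    by (rule card_mono) auto
  then have "2 \<le> CARD('a)"
    by simp
  then have "0 < d"
    using d by (cases d) auto
  have "{a :: 'a. a \<noteq> 0} \<subseteq> (\<Union>u\<in>U. {a. a ^ d = u})"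
  proof
    fix a :: 'a
    assume "a \<in> {a. a \<noteq> 0}"
    then have "(a ^ d) ^ q = 1"
      using fermat_finite_field[of a] d by (simp add: power_mult[symmetric] mult.commute)
    then show "a \<in> (\<Union>u\<in>U. {a. a ^ d = u})"
      unfolding U_def by auto
  qed
  then have "card {a :: 'a. a \<noteq> 0} \<le> (\<Sum>u\<in>U. card {a. a ^ d = u})"
    by (intro le_trans[OF card_mono card_UN_le]) auto
  also have "\<dots> \<le> (\<Sum>u\<in>U. d)"
    using card_nth_roots_le[OF \<open>0 < d\<close>] by (intro sum_mono)
  also have "\<dots> = card U * d"
    by simp
  finally have "card {a :: 'a. a \<noteq> 0} \<le> card U * d" .
  moreover have "card {a :: 'a. a \<noteq> 0} = q * d"
    using card_Diff_singleton[of "0 :: 'a" UNIV] d by (simp add: Collect_neg_eq Compl_eq_Diff_UNIV)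
  ultimately have "q * d \<le> card U * d"
    by simp
  then show ?thesis
    using \<open>0 < d\<close> unfolding U_def by simp
qed

lemma invertible_mat_if_det_nonzero:
  fixes A :: "'a::field mat"
  assumes "A \<in> carrier_mat n n" and "det A \<noteq> 0"
  shows "invertible_mat A"
proof -
  obtain B where "B \<in> carrier_mat n n" "B * A = 1\<^sub>m n" "A * B = 1\<^sub>m n"
    using det_non_zero_imp_unit[OF assms, of "()"] unfolding Units_def ring_mat_def by auto
  then show ?thesis
    using assms(1) unfolding invertible_mat_def inverts_mat_def square_mat.simps by auto
qed

lemma det_scaled_vandermonde_nonzero:
  fixes A :: "'a::field mat"
  assumes A: "A \<in> carrier_mat n n"
    and entries: "\<And>i j. i < n \<Longrightarrow> j < n \<Longrightarrow> A $$ (i, j) = c i * z i ^ j"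
    and "\<And>i. i < n \<Longrightarrow> c i \<noteq> 0" and "inj_on z {..<n}"
  shows "det A \<noteq> 0"
proof
  assume "det A = 0"
  then obtain v where v: "v \<in> carrier_vec n" "v \<noteq> 0\<^sub>v n" "A *\<^sub>v v = 0\<^sub>v n"
    using det_0_iff_vec_prod_zero_field[OF A] by auto
  define p where "p = (\<Sum>j<n. monom (v $ j) j)"
  have coeff_p: "coeff p k = (if k < n then v $ k else 0)" for k
    unfolding p_def coeff_sum coeff_monom by simp
  obtain k where "k < n" "v $ k \<noteq> 0"
    using v(1,2) by (metis carrier_vecD eq_vecI index_zero_vec)
  then have "p \<noteq> 0"
    using coeff_p[of k] by auto
  moreover have "degree p < card (z ` {..<n})"
    using \<open>p \<noteq> 0\<close> coeff_p card_image[OF assms(4)]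
    by (intro degree_less_if_coeffs_below) (auto split: if_splits)
  ultimately obtain i where i: "i < n" "poly p (z i) \<noteq> 0"
    using poly_exists_nonroot by blast
  have "0 = (A *\<^sub>v v) $ i"
    using v(3) i by simp
  also have "\<dots> = (\<Sum>j<n. A $$ (i, j) * v $ j)"
    using A v(1) i by (auto simp: scalar_prod_def atLeast0LessThan intro!: sum.cong)
  also have "\<dots> = c i * poly p (z i)"
    using entries[OF i(1)] by (simp add: p_def poly_sum poly_monom sum_distrib_left mult_ac)
  finally show False
    using assms(3)[OF i(1)] i(2) by simp
qed

lemma det_vmat_snoc_poly:
  fixes \<rho> :: "'a::field list"
  assumes len: "length \<rho> = length es" and "e \<notin> set es"
  obtains p where "coeff p e = det (vmat \<rho> es)"
    and "\<And>k. coeff p k \<noteq> 0 \<Longrightarrow> k \<in> set (es @ [e])"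
    and "\<And>r. poly p r = det (vmat (\<rho> @ [r]) (es @ [e]))"
proof
  define m where "m = length es"
  define M where "M r = vmat (\<rho> @ [r]) (es @ [e])" for r
  define c where "c j = cofactor (M 0) m j" for j
  define p where "p = (\<Sum>j<Suc m. monom (c j) ((es @ [e]) ! j))"
  have M: "M r \<in> carrier_mat (Suc m) (Suc m)" for r
    unfolding M_def vmat_def m_def using len by auto
  have last_row: "M r $$ (m, j) = r ^ ((es @ [e]) ! j)" if "j < Suc m" for r j
    unfolding M_def vmat_def using len that by (auto simp: m_def nth_append)
  have delete_last_row: "mat_delete (M r) m j = mat_delete (M 0) m j" for r j
    unfolding mat_delete_def by (rule eq_matI) (auto simp: M_def vmat_def len m_def nth_append)
  have "det (M r) = (\<Sum>j<Suc m. M r $$ (m, j) * cofactor (M r) m j)" for r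
    using M by (rule laplace_expansion_row) simp
  also have "\<dots> r = (\<Sum>j<Suc m. c j * r ^ ((es @ [e]) ! j))" for r
    by (intro sum.cong refl) (simp add: last_row c_def cofactor_def delete_last_row[of r])
  finally show "poly p r = det (vmat (\<rho> @ [r]) (es @ [e]))" for r
    by (simp add: p_def M_def poly_sum poly_monom)
  have index_e: "(es @ [e]) ! j = e \<longleftrightarrow> j = m" if "j < Suc m" for j
    using assms(2) that by (auto simp: m_def nth_append)
  have "mat_delete (M 0) m m = vmat \<rho> es"
    unfolding mat_delete_def by (rule eq_matI) (auto simp: M_def vmat_def len m_def nth_append)
  then have "c m = det (vmat \<rho> es)"
    by (simp add: c_def cofactor_def)
  then show "coeff p e = det (vmat \<rho> es)"
    unfolding p_def coeff_sum coeff_monom using index_e by simp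
  show "k \<in> set (es @ [e])" if nonzero: "coeff p k \<noteq> 0" for k
  proof -
    have "(\<Sum>j<Suc m. if (es @ [e]) ! j = k then c j else 0) \<noteq> 0"
      using nonzero unfolding p_def coeff_sum coeff_monom .
    then obtain j where "j < Suc m" and "(if (es @ [e]) ! j = k then c j else 0) \<noteq> 0"
      by (rule sum.not_neutral_contains_not_neutral) simp
    then show ?thesis
      using nth_mem[of j "es @ [e]"] by (simp add: m_def split: if_splits)
  qed
qed

lemma exists_vmat_det_nonzero:
  fixes U :: "'a::field set"
  assumes "distinct es" and "\<forall>e\<in>set es. e < card U"
  shows "\<exists>\<rho>. length \<rho> = length es \<and> set \<rho> \<subseteq> U \<and> det (vmat \<rho> es) \<noteq> 0"
  using assms
proof (induction es rule: rev_induct)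
  case Nil
  show ?case
    by (intro exI[of _ "[]"]) (simp add: vmat_def det_def)
next
  case (snoc e es)
  then obtain \<rho> where \<rho>: "length \<rho> = length es" "set \<rho> \<subseteq> U" "det (vmat \<rho> es) \<noteq> 0"
    by auto
  obtain p where p: "coeff p e = det (vmat \<rho> es)"
    "\<And>k. coeff p k \<noteq> 0 \<Longrightarrow> k \<in> set (es @ [e])"
    "\<And>r. poly p r = det (vmat (\<rho> @ [r]) (es @ [e]))"
    using det_vmat_snoc_poly[OF \<rho>(1)] snoc.prems(1) by auto
  have "p \<noteq> 0"
    using p(1) \<rho>(3) by auto
  moreover have "degree p < card U"
    using \<open>p \<noteq> 0\<close> p(2) snoc.prems(2) by (intro degree_less_if_coeffs_below) auto
  ultimately obtain r where "r \<in> U" "poly p r \<noteq> 0"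
    using poly_exists_nonroot by blast
  then show ?case
    using \<rho> p(3) by (intro exI[of _ "\<rho> @ [r]"]) auto
qed

lemma distinct_if_det_vmat_nonzero:
  fixes \<rho> :: "'a::field list"
  assumes "length \<rho> = length \<delta>" and "det (vmat \<rho> \<delta>) \<noteq> 0"
  shows "distinct \<rho>"
proof (rule ccontr)
  assume "\<not> distinct \<rho>"
  then obtain i j where ij: "i < length \<rho>" "j < length \<rho>" "i \<noteq> j" "\<rho> ! i = \<rho> ! j"
    by (metis distinct_conv_nth)
  have "vmat \<rho> \<delta> \<in> carrier_mat (length \<rho>) (length \<rho>)"
    using assms(1) by (simp add: vmat_def)
  moreover have "row (vmat \<rho> \<delta>) i = row (vmat \<rho> \<delta>) j"
    using ij by (intro eq_vecI) (simp_all add: vmat_def)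
  ultimately have "det (vmat \<rho> \<delta>) = 0"
    using det_identical_rows ij(1-3) by blast
  with assms(2) show False
    by contradiction
qed

lemma inj_on_power_roots_of_unity:
  fixes g q :: nat
  assumes "coprime g q"
  shows "inj_on (\<lambda>r :: 'a::monoid_mult. r ^ g) {r. r ^ q = 1}"
proof (rule inj_onI)
  obtain u where u: "[g * u = 1] (mod q)"
    using cong_solve_coprime_nat[OF assms] by auto
  have root: "(r ^ g) ^ u = r" if "r \<in> {r. r ^ q = 1}" for r :: 'a
  proof -
    have "(r ^ g) ^ u = r ^ (g * u)"
      by (simp add: power_mult)
    also have "\<dots> = r ^ 1"
      using that u by (intro power_cong_eq) auto
    finally show ?thesis
      by simp
  qed
  fix r s :: 'a
  assume "r \<in> {r. r ^ q = 1}" "s \<in> {r. r ^ q = 1}" "r ^ g = s ^ g"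
  then show "r = s"
    using root by metis
qed

lemma invertible_vmat_progression:
  fixes \<rho> :: "'a::field list"
  assumes "distinct \<rho>" and roots: "\<forall>r\<in>set \<rho>. r ^ q = 1" and "0 < q"
    and len: "length \<rho> = length es" and "coprime g q"
    and progression: "\<forall>j<length es. [es ! j = e + j * g] (mod q)"
  shows "invertible_mat (vmat \<rho> es)"
proof -
  define n where "n = length es"
  have V: "vmat \<rho> es \<in> carrier_mat n n"
    unfolding vmat_def n_def using len by simp
  have root_i: "\<rho> ! i ^ q = 1" if "i < n" for i
    using roots that len by (simp add: n_def)
  have "vmat \<rho> es $$ (i, j) = (\<rho> ! i ^ e) * (\<rho> ! i ^ g) ^ j" if "i < n" "j < n" for i j
  proof -
    have "vmat \<rho> es $$ (i, j) = \<rho> ! i ^ (es ! j)"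
      unfolding vmat_def using that len by (simp add: n_def)
    also have "\<dots> = \<rho> ! i ^ (e + j * g)"
      using root_i[OF that(1)] progression that(2) by (intro power_cong_eq) (auto simp: n_def)
    finally show ?thesis
      by (simp add: power_add power_mult mult.commute)
  qed
  moreover have "\<rho> ! i ^ e \<noteq> 0" if "i < n" for i
    using root_i[OF that] \<open>0 < q\<close> by (cases "\<rho> ! i = 0") (auto simp: power_0_left)
  moreover have "inj_on (\<lambda>i. \<rho> ! i ^ g) {..<n}"
  proof -
    have "inj_on ((!) \<rho>) {..<n}"
      using \<open>distinct \<rho>\<close> len by (simp add: inj_on_nth n_def)
    moreover have "(!) \<rho> ` {..<n} \<subseteq> {r. r ^ q = 1}"
      using root_i by auto
    ultimately have "inj_on ((\<lambda>r. r ^ g) \<circ> (!) \<rho>) {..<n}"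
      using inj_on_power_roots_of_unity[OF \<open>coprime g q\<close>]
      by (blast intro: comp_inj_on inj_on_subset)
    then show ?thesis
      by (simp add: o_def)
  qed
  ultimately have "det (vmat \<rho> es) \<noteq> 0"
    by (intro det_scaled_vandermonde_nonzero[OF V])
  with V show ?thesis
    by (rule invertible_mat_if_det_nonzero)
qed

lemma pick_atLeastLessThan:
  assumes "j < n"
  shows "pick {0..<n} j = j"
proof -
  have "{a \<in> {0..<n}. a < j} = {0..<j}"
    using assms by auto
  then show ?thesis
    using pick_card_in_set[of j "{0..<n}"] assms by simp
qed

lemma submatrix_vmat_all_columns:
  assumes "I \<subseteq> {0..<length \<rho>}"
  shows "submatrix (vmat \<rho> es) I {0..<length es}
    = vmat (map (\<lambda>i. \<rho> ! pick I i) [0..<card I]) es"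
proof -
  have rows: "{i. i < length \<rho> \<and> i \<in> I} = I"
    and cols: "{j. j < length es \<and> j \<in> {0..<length es}} = {0..<length es}"
    using assms by auto
  have "finite I"
    using assms finite_subset by blast
  then have "pick I i < length \<rho>" if "i < card I" for i
    using pick_in_set_le[OF that] assms by auto
  then show ?thesis
    by (intro eq_matI)
      (auto simp: dim_submatrix vmat_def rows cols submatrix_index pick_atLeastLessThan)
qed

lemma distinct_map_pick:
  assumes "distinct \<rho>" and "I \<subseteq> {0..<length \<rho>}"
  shows "distinct (map (\<lambda>i. \<rho> ! pick I i) [0..<card I])"
proof -
  have "strict_mono_on {0..<card I} (pick I)"
    by (intro strict_mono_onI pick_mono_le) auto
  then have "inj_on (pick I) {0..<card I}"
    by (rule strict_mono_on_imp_inj_on)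
  moreover have "pick I ` {0..<card I} \<subseteq> {0..<length \<rho>}"
    using pick_in_set_le assms(2) by auto
  moreover have "inj_on ((!) \<rho>) {0..<length \<rho>}"
    using assms(1) by (simp add: inj_on_nth)
  ultimately have "inj_on ((!) \<rho> \<circ> pick I) {0..<card I}"
    by (blast intro: comp_inj_on inj_on_subset)
  then show ?thesis
    by (simp add: distinct_map o_def)
qed

lemma all_TxT_invertible_vmat_progression:
  fixes \<rho> :: "'a::field list"
  assumes "distinct \<rho>" and roots: "\<forall>r\<in>set \<rho>. r ^ q = 1" and "0 < q"
    and len: "length es = T" and "coprime g q"
    and progression: "\<forall>j<T. [es ! j = e + j * g] (mod q)"
  shows "all_TxT_invertible T (vmat \<rho> es)"
  unfolding all_TxT_invertible_def
proof (intro allI impI)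
  fix I J
  assume I: "I \<subseteq> {0..<dim_row (vmat \<rho> es)}" and J: "J \<subseteq> {0..<dim_col (vmat \<rho> es)}"
    and "card I = T" and "card J = T"
  then have I': "I \<subseteq> {0..<length \<rho>}" and "J = {0..<length es}"
    using len card_subset_eq[of "{0..<length es}" J] by (auto simp: vmat_def)
  define \<rho>' where "\<rho>' = map (\<lambda>i. \<rho> ! pick I i) [0..<card I]"
  have "set \<rho>' \<subseteq> set \<rho>"
    using pick_in_set_le I' by (fastforce simp: \<rho>'_def)
  then have "invertible_mat (vmat \<rho>' es)"
    using roots len progression \<open>card I = T\<close> distinct_map_pick[OF \<open>distinct \<rho>\<close> I']
    by (intro invertible_vmat_progression[OF _ _ \<open>0 < q\<close> _ \<open>coprime g q\<close>])
      (auto simp: \<rho>'_def)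
  then show "invertible_mat (submatrix (vmat \<rho> es) I J)"
    unfolding \<open>J = _\<close> submatrix_vmat_all_columns[OF I'] \<rho>'_def .
qed

section \<open>The degree lattice\<close>

lemma lattice_short_vector:
  fixes A B t m n :: int
  assumes "0 \<le> t" and "t \<le> A" and "t \<le> B"
    and bound_a: "\<bar>m * A - n * t\<bar> < A + t" and bound_b: "\<bar>m * t + n * B\<bar> < B + t"
  shows "(m, n) \<in> {(0, 0), (1, 0), (-1, 0), (0, 1), (0, -1)}"
proof -
  (* Equal signs make the second coordinate too long, opposite signs the first. *)
  have "m = 0 \<or> n = 0"
  proof (rule ccontr)
    assume "\<not> (m = 0 \<or> n = 0)"
    then consider "1 \<le> m" "1 \<le> n" | "m \<le> -1" "n \<le> -1" | "1 \<le> m" "n \<le> -1" | "m \<le> -1" "1 \<le> n"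
      by linarith
    then show False
    proof cases
      case 1
      then show False
        using mult_right_mono[OF 1(1), of t] mult_right_mono[OF 1(2), of B] assms by linarith
    next
      case 2
      then show False
        using mult_right_mono[OF 2(1), of t] mult_right_mono[OF 2(2), of B] assms by linarith
    next
      case 3
      then show False
        using mult_right_mono[OF 3(1), of A] mult_right_mono[OF 3(2), of t] assms by linarith
    next
      case 4
      then show False
        using mult_right_mono[OF 4(1), of A] mult_right_mono[OF 4(2), of t] assms by linarith
    qed
  qed
  moreover have "\<bar>m\<bar> \<le> 1" if "n = 0"
  proof -
    have "\<bar>m * A\<bar> < 2 * A"
      using bound_a that assms(2) by simp
    then show ?thesis
      using mult_right_mono[of 2 m A] mult_right_mono[of m "-2" A] assms(1,2) by linarith
  qed
  moreover have "\<bar>n\<bar> \<le> 1" if "m = 0"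
  proof -
    have "\<bar>n * B\<bar> < 2 * B"
      using bound_b that assms(3) by simp
    then show ?thesis
      using mult_right_mono[of 2 n B] mult_right_mono[of n "-2" B] assms(1,3) by linarith
  qed
  ultimately show ?thesis
    by auto
qed

lemma coprime_mult_add_power2:
  fixes a b t :: int
  assumes "coprime a t"
  shows "coprime a (a * b + t\<^sup>2)"
proof -
  have "[t\<^sup>2 = a * b + t\<^sup>2] (mod a)"
    by (simp add: cong_def)
  moreover have "coprime a (t\<^sup>2)"
    using assms by simp
  ultimately show ?thesis
    using coprime_cong_cong_right by blast
qed

lemma set_plus_times: "(X \<times> Y) + (X' \<times> Y') = (X + X') \<times> (Y + Y')"
  unfolding set_plus_def by force

lemma set_plus_atLeastAtMost_int:
  fixes a b c d :: int
  assumes "a \<le> b" and "c \<le> d"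
  shows "{a..b} + {c..d} = {a + c..b + d}"
proof (intro equalityI subsetI)
  fix s assume "s \<in> {a + c..b + d}"
  then have "max a (s - d) \<in> {a..b}" and "s - max a (s - d) \<in> {c..d}"
    using assms by auto
  then show "s \<in> {a..b} + {c..d}"
    by (metis add.commute diff_add_cancel set_plus_intro)
qed (auto elim!: set_plus_elim)

lemma singleton_set_plus: "{c} + X = (+) c ` X"
  by (auto simp: set_plus_def)

lemma set_plus_singleton: "X + {c} = (\<lambda>x. x + c) ` X"
  by (auto simp: set_plus_def)

lemmas set_plus_box_simps =
  set_plus_times set_plus_atLeastAtMost_int singleton_set_plus set_plus_singleton

lemma image_int_Pair_left: "(\<lambda>i. (int i, c)) ` {0..<n} = {0..int n - 1} \<times> {c}"
  by (auto intro!: image_eqI[where x = "nat _"])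

lemma image_int_Pair_right: "(\<lambda>i. (c, int i)) ` {0..<n} = {c} \<times> {0..int n - 1}"
  by (auto intro!: image_eqI[where x = "nat _"])

locale degree_lattice =
  fixes q A B t x y :: int
  assumes q_eq: "q = A * B + t\<^sup>2"
    and t_pos: "0 < t" and t_le_A: "t \<le> A" and t_le_B: "t \<le> B"
    and coprime_A_t: "coprime A t" and coprime_B_t: "coprime B t" and coprime_x_q: "coprime x q"
    and dvd_x_t_plus_y_A: "q dvd x * t + y * A"
begin

definition lattice_deg :: "int \<times> int \<Rightarrow> nat" where
  "lattice_deg P = nat ((fst P * y + snd P * x) mod q)"

lemma q_pos: "0 < q"
  using q_eq t_pos t_le_A t_le_B by (simp add: add_nonneg_pos)

lemma coprime_A_q: "coprime A q"
  using coprime_mult_add_power2[OF coprime_A_t] by (simp add: q_eq)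

lemma coprime_t_q: "coprime t q"
proof -
  have "[A * B = q] (mod t)"
    by (simp add: q_eq cong_def power2_eq_square)
  moreover have "coprime (A * B) t"
    using coprime_A_t coprime_B_t by simp
  ultimately show ?thesis
    by (metis cong_imp_coprime coprime_commute)
qed

lemma coprime_y_q: "coprime y q"
proof (rule coprimeI)
  fix d assume "d dvd y" and "d dvd q"
  then have "d dvd (x * t + y * A) - y * A"
    using dvd_x_t_plus_y_A by (blast intro: dvd_diff dvd_trans dvd_mult2)
  moreover have "coprime d x"
    using coprime_x_q
    by (intro coprime_divisors[OF \<open>d dvd q\<close> dvd_refl]) (simp add: coprime_commute)
  ultimately have "d dvd t"
    by (simp add: coprime_dvd_mult_right_iff)
  with coprime_t_q show "is_unit d"
    using \<open>d dvd q\<close> by (rule coprime_common_divisor)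
qed

lemma lattice_deg_less: "lattice_deg P < nat q"
  using q_pos by (simp add: lattice_deg_def nat_less_iff)

lemma int_lattice_deg: "int (lattice_deg P) = (fst P * y + snd P * x) mod q"
  using q_pos by (simp add: lattice_deg_def)

lemma lattice_deg_eq_iff:
  "lattice_deg P = lattice_deg P' \<longleftrightarrow> q dvd (fst P' - fst P) * y + (snd P' - snd P) * x"
proof -
  have "lattice_deg P = lattice_deg P' \<longleftrightarrow> int (lattice_deg P) = int (lattice_deg P')"
    by linarith
  also have "\<dots> \<longleftrightarrow> q dvd (fst P' * y + snd P' * x) - (fst P * y + snd P * x)"
    unfolding int_lattice_deg mod_eq_dvd_iff by (rule dvd_diff_commute)
  finally show ?thesis
    by (simp add: algebra_simps)
qed

lemma lattice_deg_add: "lattice_deg (P + P') = (lattice_deg P + lattice_deg P') mod nat q"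
proof -
  have "int (lattice_deg (P + P')) = ((fst P * y + snd P * x) + (fst P' * y + snd P' * x)) mod q"
    unfolding int_lattice_deg by (simp add: algebra_simps)
  also have "\<dots> = int ((lattice_deg P + lattice_deg P') mod nat q)"
    using q_pos unfolding of_nat_mod of_nat_add int_lattice_deg by (simp add: mod_add_eq)
  finally show ?thesis
    by linarith
qed

lemma sumset_mod_lattice_deg:
  "sumset_mod (nat q) (lattice_deg ` X) (lattice_deg ` Y) = lattice_deg ` (X + Y)"
proof (intro equalityI subsetI)
  fix d assume "d \<in> sumset_mod (nat q) (lattice_deg ` X) (lattice_deg ` Y)"
  then obtain P Q where "P \<in> X" "Q \<in> Y" "d = lattice_deg (P + Q)"
    unfolding sumset_mod_def lattice_deg_add by blast
  then show "d \<in> lattice_deg ` (X + Y)"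
    by blast
next
  fix d assume "d \<in> lattice_deg ` (X + Y)"
  then obtain P Q where "P \<in> X" "Q \<in> Y" "d = lattice_deg (P + Q)"
    by (auto elim: set_plus_elim)
  then show "d \<in> sumset_mod (nat q) (lattice_deg ` X) (lattice_deg ` Y)"
    unfolding sumset_mod_def lattice_deg_add by blast
qed

lemma dvd_B_x_minus_t_y: "q dvd B * x - t * y"
proof -
  have "A * (B * x - t * y) = q * x - t * (x * t + y * A)"
    by (simp add: q_eq algebra_simps power2_eq_square)
  then have "q dvd A * (B * x - t * y)"
    using dvd_x_t_plus_y_A by simp
  then show ?thesis
    using coprime_A_q by (simp add: coprime_commute coprime_dvd_mult_right_iff)
qed

lemma dvd_lattice_iff:
  "q dvd a * y + b * x \<longleftrightarrow> (\<exists>m n. a = m * A - n * t \<and> b = m * t + n * B)"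
proof
  (* Cramer's rule for the basis (A, t), (-t, B) of determinant q. *)
  assume dvd: "q dvd a * y + b * x"
  have "x * (b * A - a * t) = A * (a * y + b * x) - a * (x * t + y * A)"
    by (simp add: algebra_simps)
  then have "q dvd x * (b * A - a * t)"
    using dvd dvd_x_t_plus_y_A by simp
  then obtain n where n: "b * A - a * t = q * n"
    using coprime_x_q by (auto simp: coprime_commute coprime_dvd_mult_right_iff)
  have "A * (a * B + b * t) = a * q + t * (b * A - a * t)"
    by (simp add: q_eq algebra_simps power2_eq_square)
  then have "q dvd A * (a * B + b * t)"
    by (simp add: n)
  then obtain m where m: "a * B + b * t = q * m"
    using coprime_A_q by (auto simp: coprime_commute coprime_dvd_mult_right_iff)
  have "q * a = A * (a * B + b * t) - t * (b * A - a * t)"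
    and "q * b = t * (a * B + b * t) + B * (b * A - a * t)"
    by (simp_all add: q_eq algebra_simps power2_eq_square)
  then have "q * a = q * (m * A - n * t)" and "q * b = q * (m * t + n * B)"
    unfolding m n by (simp_all add: algebra_simps)
  then show "\<exists>m n. a = m * A - n * t \<and> b = m * t + n * B"
    using q_pos by auto
next
  assume "\<exists>m n. a = m * A - n * t \<and> b = m * t + n * B"
  then obtain m n where ab: "a = m * A - n * t" "b = m * t + n * B"
    by blast
  have "a * y + b * x = m * (x * t + y * A) + n * (B * x - t * y)"
    unfolding ab by (simp add: algebra_simps)
  then show "q dvd a * y + b * x"
    using dvd_x_t_plus_y_A dvd_B_x_minus_t_y by simp
qed

lemma lattice_deg_add_A_t: "lattice_deg (P + (A, t)) = lattice_deg P"
  unfolding lattice_deg_eq_iff dvd_lattice_iff by (rule exI[of _ "-1"], rule exI[of _ 0]) simp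

lemma lattice_deg_add_neg_t_B: "lattice_deg (P + (- t, B)) = lattice_deg P"
  unfolding lattice_deg_eq_iff dvd_lattice_iff by (rule exI[of _ 0], rule exI[of _ "-1"]) simp

lemma lattice_deg_collision:
  assumes "lattice_deg P = lattice_deg P'"
    and "\<bar>fst P' - fst P\<bar> < A + t" and "\<bar>snd P' - snd P\<bar> < B + t"
  shows "P' - P \<in> {0, (A, t), - (A, t), (- t, B), - (- t, B)}"
proof -
  obtain m n where mn: "fst P' - fst P = m * A - n * t" "snd P' - snd P = m * t + n * B"
    using assms(1) unfolding lattice_deg_eq_iff dvd_lattice_iff by blast
  have "(m, n) \<in> {(0, 0), (1, 0), (-1, 0), (0, 1), (0, -1)}"
    using assms(2,3) t_pos t_le_A t_le_B unfolding mn by (intro lattice_short_vector) auto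
  then show ?thesis
    using mn by (auto simp: prod_eq_iff zero_prod_def)
qed

lemma inj_on_lattice_deg:
  assumes window: "\<And>P P'. P \<in> S \<Longrightarrow> P' \<in> S \<Longrightarrow>
      \<bar>fst P' - fst P\<bar> < A + t \<and> \<bar>snd P' - snd P\<bar> < B + t"
    and "\<And>P. P \<in> S \<Longrightarrow> P + (A, t) \<notin> S" and "\<And>P. P \<in> S \<Longrightarrow> P + (- t, B) \<notin> S"
  shows "inj_on lattice_deg S"
proof (rule inj_onI)
  fix P P' assume "P \<in> S" "P' \<in> S" "lattice_deg P = lattice_deg P'"
  with lattice_deg_collision window
  have "P' - P \<in> {0, (A, t), - (A, t), (- t, B), - (- t, B)}"
    by blast
  then have "P' = P \<or> P' = P + (A, t) \<or> P = P' + (A, t) \<or> P' = P + (- t, B) \<or> P = P' + (- t, B)"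
    by (cases P, cases P') (auto simp: zero_prod_def)
  then show "P = P'"
    using assms(2,3) \<open>P \<in> S\<close> \<open>P' \<in> S\<close> by metis
qed

end

section \<open>The construction CAT_x\<close>

locale cat_construction =
  fixes K L T x :: nat
  assumes L_le_K: "L \<le> K" and T_le_L: "T \<le> L" and two_le_T: "2 \<le> T"
    and coprime_x_cat_q: "coprime x (cat_q K L T)"
begin

abbreviation "A \<equiv> int (cat_Kstar K T)"
abbreviation "B \<equiv> int (cat_Lstar L T)"
abbreviation "t \<equiv> int T - 1"
abbreviation "q \<equiv> cat_q K L T"
abbreviation "y \<equiv> cat_y K L T x"
abbreviation "alpha_p \<equiv> cat_alpha_p K L T x"
abbreviation "alpha_s \<equiv> cat_alpha_s K L T x"
abbreviation "beta_p \<equiv> cat_beta_p K L T x"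
abbreviation "beta_s \<equiv> cat_beta_s K L T x"
abbreviation "N \<equiv> (K + 1) * (L + 1) + (T - 1)\<^sup>2 + cat_kappa K T + cat_lambda L T"

lemma coprime_Kstar: "coprime (cat_Kstar K T) (T - 1)"
  and kappa_less: "cat_kappa K T < T - 1"
  using coprime_Least_shift[of "T - 1" "K + 1"] two_le_T
  by (simp_all add: cat_Kstar_def cat_kappa_def)

lemma coprime_Lstar: "coprime (cat_Lstar L T) (T - 1)"
  and lambda_less: "cat_lambda L T < T - 1"
  using coprime_Least_shift[of "T - 1" "L + 1"] two_le_T
  by (simp_all add: cat_Lstar_def cat_lambda_def)

lemma int_T_minus_1: "int (T - 1) = t"
  using two_le_T by simp

lemma coprime_Kstar_Lstar_t: "coprime A t" "coprime B t"
  using coprime_Kstar coprime_Lstar unfolding int_T_minus_1[symmetric] coprime_int_iff by simp_all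

lemma cat_bounds: "1 \<le> t" "t + 1 \<le> int L" "int L \<le> int K"
  "int K + 1 \<le> A" "A \<le> int K + t" "int L + 1 \<le> B" "B \<le> int L + t"
  using two_le_T T_le_L L_le_K kappa_less lambda_less by (auto simp: cat_Kstar_def cat_Lstar_def)

lemma int_q_eq: "int q = A * B + t\<^sup>2"
  using two_le_T by (simp add: cat_q_def)

lemma y_cong: "[x * (T - 1) + y * cat_Kstar K T = 0] (mod q)"
proof -
  have "coprime (int (cat_Kstar K T)) (int q)"
    using coprime_mult_add_power2[OF coprime_Kstar_Lstar_t(1)] by (simp add: int_q_eq)
  moreover have "0 < q"
    using two_le_T by (simp add: cat_q_def)
  ultimately show ?thesis
    using theI'[OF ex1_cong_solution, of "cat_Kstar K T" q "x * (T - 1)"]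
    by (simp add: cat_y_def)
qed

sublocale degree_lattice "int q" A B t "int x" "int y"
proof
  show "int q = A * B + t\<^sup>2"
    by (rule int_q_eq)
  show "0 < t" "t \<le> A" "t \<le> B"
    using cat_bounds by linarith+
  show "coprime A t" "coprime B t"
    by (fact coprime_Kstar_Lstar_t)+
  show "coprime (int x) (int q)"
    using coprime_x_cat_q by simp
  have "int q dvd int (x * (T - 1) + y * cat_Kstar K T)"
    using y_cong unfolding cong_0_iff int_dvd_int_iff .
  then show "int q dvd int x * t + int y * A"
    by (simp only: of_nat_add of_nat_mult int_T_minus_1)
qed

lemma sumset_mod_cat_q:
  "sumset_mod q (lattice_deg ` X) (lattice_deg ` Y) = lattice_deg ` (X + Y)"
  using sumset_mod_lattice_deg by simp

lemma set_alpha_p: "set alpha_p = lattice_deg ` ({0..int K - 1} \<times> {0})"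
proof -
  have "(i * y) mod q = lattice_deg (int i, 0)" for i
    by (simp add: lattice_deg_def nat_mod_as_int)
  then show ?thesis
    unfolding cat_alpha_p_def image_int_Pair_left[symmetric] by (simp add: image_image)
qed

lemma set_alpha_s: "set alpha_s = lattice_deg ` ({int K} \<times> {0..t})"
proof -
  have "(K * y + i * x) mod q = lattice_deg (int K, int i)" for i
    by (simp add: lattice_deg_def nat_mod_as_int)
  then show ?thesis
    unfolding cat_alpha_s_def image_int_Pair_right[symmetric] by (simp add: image_image)
qed

lemma set_beta_p: "set beta_p = lattice_deg ` ({0} \<times> {0..int L - 1})"
proof -
  have "(i * x) mod q = lattice_deg (0, int i)" for i
    by (simp add: lattice_deg_def nat_mod_as_int)
  then show ?thesis
    unfolding cat_beta_p_def image_int_Pair_right[symmetric] by (simp add: image_image)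
qed

lemma set_beta_s: "set beta_s = lattice_deg ` ({0..t} \<times> {-1})"
  unfolding cat_beta_s_def image_int_Pair_left[symmetric]
  by (simp add: image_image lattice_deg_def)

definition TL_index :: "(int \<times> int) set" where
  "TL_index = {0..int K - 1} \<times> {0..int L - 1}"

definition TR_index :: "(int \<times> int) set" where
  "TR_index = {0..int K + t - 1} \<times> {-1}"

definition BL_index :: "(int \<times> int) set" where
  "BL_index = {int K} \<times> {0..int L + t - 1}"

definition BR_index :: "(int \<times> int) set" where
  "BR_index = {int K..int K + t} \<times> {-1..t - 1}"

(* Together with TR_index and BL_index, these three boxes cover BR_index except for the
   translates of TR_index by (A, t) and of BL_index by (t, -B). *)
definition BR_inner :: "(int \<times> int) set" where
  "BR_inner = {int K + 1..int K + t - 1} \<times> {0..t - 2}"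

definition BR_top :: "(int \<times> int) set" where
  "BR_top = {int K + 1..A - 1} \<times> {t - 1}"

definition BR_right :: "(int \<times> int) set" where
  "BR_right = {int K + t} \<times> {int L + t - B..t - 2}"

definition rest_index :: "(int \<times> int) set" where
  "rest_index = TR_index \<union> BL_index \<union> BR_inner \<union> BR_top \<union> BR_right"

definition rep_index :: "(int \<times> int) set" where
  "rep_index = TL_index \<union> rest_index"

lemmas rep_index_defs = rep_index_def rest_index_def TL_index_def TR_index_def BL_index_def
  BR_inner_def BR_top_def BR_right_def

lemma cat_TL_eq: "cat_TL q alpha_p alpha_s beta_p beta_s = lattice_deg ` TL_index"
proof -
  have "{0..int K - 1} \<times> {0} + {0} \<times> {0..int L - 1} = TL_index"
    using cat_bounds unfolding TL_index_def by (simp add: set_plus_box_simps ac_simps)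
  then show ?thesis
    unfolding cat_TL_def set_alpha_p set_beta_p sumset_mod_cat_q by simp
qed

lemma cat_TR_eq: "cat_TR q alpha_p alpha_s beta_p beta_s = lattice_deg ` TR_index"
proof -
  have "{0..int K - 1} \<times> {0} + {0..t} \<times> {-1} = TR_index"
    using cat_bounds unfolding TR_index_def by (simp add: set_plus_box_simps ac_simps)
  then show ?thesis
    unfolding cat_TR_def set_alpha_p set_beta_s sumset_mod_cat_q by simp
qed

lemma cat_BL_eq: "cat_BL q alpha_p alpha_s beta_p beta_s = lattice_deg ` BL_index"
proof -
  have "{int K} \<times> {0..t} + {0} \<times> {0..int L - 1} = BL_index"
    using cat_bounds unfolding BL_index_def by (simp add: set_plus_box_simps ac_simps)
  then show ?thesis
    unfolding cat_BL_def set_alpha_s set_beta_p sumset_mod_cat_q by simp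
qed

lemma cat_BR_eq: "cat_BR q alpha_p alpha_s beta_p beta_s = lattice_deg ` BR_index"
proof -
  have "{int K} \<times> {0..t} + {0..t} \<times> {-1} = BR_index"
    using cat_bounds unfolding BR_index_def by (simp add: set_plus_box_simps ac_simps)
  then show ?thesis
    unfolding cat_BR_def set_alpha_s set_beta_s sumset_mod_cat_q by simp
qed

lemma BR_index_covered:
  assumes "P \<in> BR_index"
  shows "P \<in> rest_index \<or> P - (A, t) \<in> TR_index \<or> P + (- t, B) \<in> BL_index"
proof -
  obtain a b where P: "P = (a, b)"
    by fastforce
  have ab: "int K \<le> a" "a \<le> int K + t" "-1 \<le> b" "b \<le> t - 1"
    using assms by (auto simp: BR_index_def P)
  consider "b = t - 1" "A \<le> a" | "a = int K + t" "b < int L + t - B"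
    | "b = -1" | "a = int K" | "int K < a" "a < int K + t" "0 \<le> b" "b < t - 1"
    | "b = t - 1" "int K < a" "a < A" | "a = int K + t" "int L + t - B \<le> b" "b < t - 1"
    using ab cat_bounds by linarith
  then show ?thesis
  proof cases
    case 1
    then show ?thesis
      using ab cat_bounds by (simp add: TR_index_def P)
  next
    case 2
    then show ?thesis
      using ab cat_bounds by (simp add: BL_index_def P)
  qed (use ab cat_bounds in \<open>auto simp: rep_index_defs P\<close>)
qed

lemma rest_index_subset: "rest_index \<subseteq> TR_index \<union> BL_index \<union> BR_index"
proof -
  have "BR_inner \<subseteq> BR_index" and "BR_top \<subseteq> BR_index" and "BR_right \<subseteq> BR_index"
    using cat_bounds by (auto simp: BR_index_def BR_inner_def BR_top_def BR_right_def)
  then show ?thesis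
    unfolding rest_index_def by blast
qed

lemma lattice_deg_BR_index_subset: "lattice_deg ` BR_index \<subseteq> lattice_deg ` rest_index"
proof
  fix d assume "d \<in> lattice_deg ` BR_index"
  then obtain P where P: "P \<in> BR_index" "d = lattice_deg P"
    by blast
  from BR_index_covered[OF P(1)]
  consider "P \<in> rest_index" | "P - (A, t) \<in> TR_index" | "P + (- t, B) \<in> BL_index"
    by blast
  then show "d \<in> lattice_deg ` rest_index"
  proof cases
    case 1
    then show ?thesis
      using P(2) by blast
  next
    case 2
    have "d = lattice_deg (P - (A, t))"
      using P(2) lattice_deg_add_A_t[of "P - (A, t)"] by simp
    then show ?thesis
      using 2 unfolding rest_index_def by blast
  next
    case 3
    have "d = lattice_deg (P + (- t, B))"
      using P(2) lattice_deg_add_neg_t_B[of P] by simp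
    then show ?thesis
      using 3 unfolding rest_index_def by blast
  qed
qed

lemma lattice_deg_rest_index:
  "lattice_deg ` (TR_index \<union> BL_index \<union> BR_index) = lattice_deg ` rest_index"
proof
  show "lattice_deg ` rest_index \<subseteq> lattice_deg ` (TR_index \<union> BL_index \<union> BR_index)"
    using rest_index_subset by (rule image_mono)
  show "lattice_deg ` (TR_index \<union> BL_index \<union> BR_index) \<subseteq> lattice_deg ` rest_index"
    using lattice_deg_BR_index_subset by (auto simp: rest_index_def)
qed

lemma rep_index_subset: "rep_index \<subseteq> {0..int K + t} \<times> {-1..int L + t - 1}"
  using cat_bounds
  by (auto simp: rep_index_defs)

lemma rep_index_translate_A_t: "P \<in> rep_index \<Longrightarrow> P + (A, t) \<notin> rep_index"
  using cat_bounds
  by (cases P) (auto simp: rep_index_defs)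

lemma rep_index_translate_neg_t_B: "P \<in> rep_index \<Longrightarrow> P + (- t, B) \<notin> rep_index"
  using cat_bounds
  by (cases P) (auto simp: rep_index_defs)

lemma inj_on_rep_index: "inj_on lattice_deg rep_index"
proof (rule inj_on_lattice_deg)
  fix P P' assume "P \<in> rep_index" "P' \<in> rep_index"
  then show "\<bar>fst P' - fst P\<bar> < A + t \<and> \<bar>snd P' - snd P\<bar> < B + t"
    using rep_index_subset cat_bounds by (cases P, cases P') fastforce
qed (fact rep_index_translate_A_t rep_index_translate_neg_t_B)+

lemma card_rep_index:
  "int (card rep_index) = (int K + 1) * (int L + 1) + t\<^sup>2 + (A - int K - 1) + (B - int L - 1)"
proof -
  have "rep_index = TL_index \<union> TR_index \<union> BL_index \<union> BR_inner \<union> BR_top \<union> BR_right"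
    by (auto simp: rep_index_def rest_index_def)
  then have "card rep_index
      = card TL_index + card TR_index + card BL_index + card BR_inner + card BR_top + card BR_right"
    using cat_bounds by (simp add: card_Un_disjoint rep_index_defs Int_Un_distrib2 disjoint_iff)
  also have "int \<dots> = int K * int L + (int K + t) + (int L + t) + (t - 1) * (t - 1)
      + (A - int K - 1) + (B - int L - 1)"
    using cat_bounds by (simp add: rep_index_defs card_cartesian_product)
  finally show ?thesis
    by (simp add: algebra_simps power2_eq_square)
qed

lemma cat_all_eq: "cat_all q alpha_p alpha_s beta_p beta_s = lattice_deg ` rep_index"
  unfolding cat_all_def cat_TL_eq cat_TR_eq cat_BL_eq cat_BR_eq rep_index_def
    lattice_deg_rest_index[symmetric] image_Un by (simp only: Un_assoc)

lemma finite_rep_index: "finite rep_index"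
  using rep_index_subset by (rule finite_subset) simp

lemma card_cat_all: "card (cat_all q alpha_p alpha_s beta_p beta_s) = N"
proof -
  have "int (card (cat_all q alpha_p alpha_s beta_p beta_s)) = int (card rep_index)"
    unfolding cat_all_eq card_image[OF inj_on_rep_index] ..
  also have "\<dots> = int N"
    unfolding card_rep_index using two_le_T
    by (simp add: cat_Kstar_def cat_Lstar_def algebra_simps)
  finally show ?thesis
    by (simp only: of_nat_eq_iff)
qed

lemma card_cat_TL: "card (cat_TL q alpha_p alpha_s beta_p beta_s) = K * L"
proof -
  have "inj_on lattice_deg TL_index"
    using inj_on_rep_index by (rule inj_on_subset) (simp add: rep_index_def)
  then show ?thesis
    unfolding cat_TL_eq by (simp add: card_image TL_index_def card_cartesian_product)
qed

lemma cat_TL_disjoint: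
  "lattice_deg ` TL_index \<inter> lattice_deg ` (TR_index \<union> BL_index \<union> BR_index) = {}"
proof -
  have "TL_index \<inter> rest_index = {}"
    using cat_bounds by (auto simp: rep_index_defs)
  then have "lattice_deg ` TL_index \<inter> lattice_deg ` rest_index = {}"
    using inj_on_rep_index by (simp add: rep_index_def inj_on_image_Int[symmetric])
  then show ?thesis
    unfolding lattice_deg_rest_index .
qed

theorem cat_cond_I_III_holds: "cat_cond_I_III q alpha_p alpha_s beta_p beta_s K L T N"
  unfolding cat_cond_I_III_def
proof (intro conjI)
  show "length alpha_p = K" "length alpha_s = T" "length beta_p = L" "length beta_s = T"
    by (simp_all add: cat_alpha_p_def cat_alpha_s_def cat_beta_p_def cat_beta_s_def)
  show "\<forall>v\<in>set alpha_p \<union> set alpha_s \<union> set beta_p \<union> set beta_s. v < q"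
    using lattice_deg_less unfolding set_alpha_p set_alpha_s set_beta_p set_beta_s by auto
  show "card (cat_all q alpha_p alpha_s beta_p beta_s) = N"
    by (rule card_cat_all)
  show "card (cat_TL q alpha_p alpha_s beta_p beta_s) = K * L"
    by (rule card_cat_TL)
  show "cat_TL q alpha_p alpha_s beta_p beta_s \<inter> cat_TR q alpha_p alpha_s beta_p beta_s = {}"
    "cat_TL q alpha_p alpha_s beta_p beta_s \<inter> cat_BL q alpha_p alpha_s beta_p beta_s = {}"
    "cat_TL q alpha_p alpha_s beta_p beta_s \<inter> cat_BR q alpha_p alpha_s beta_p beta_s = {}"
    using cat_TL_disjoint unfolding cat_TL_eq cat_TR_eq cat_BL_eq cat_BR_eq by auto
qed

lemma beta_s_progression:
  "\<forall>j<T. [beta_s ! j = nat ((- int x) mod int q) + j * y] (mod q)"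
  using q_pos by (simp add: cat_beta_s_def cong_int_iff[symmetric] cong_def mod_simps algebra_simps)

theorem cat_cond_IV_holds:
  assumes "q dvd CARD('p::prime_card) - 1"
  shows "cat_cond_IV TYPE('p mod_ring) q alpha_p alpha_s beta_p beta_s T N"
proof -
  define \<gamma> where "\<gamma> = cat_gamma q alpha_p alpha_s beta_p beta_s"
  have "finite (cat_all q alpha_p alpha_s beta_p beta_s)"
    unfolding cat_all_eq using finite_rep_index by simp
  then have \<gamma>: "distinct \<gamma>" "length \<gamma> = N" "\<forall>e\<in>set \<gamma>. e < q"
    using card_cat_all lattice_deg_less
    by (auto simp: \<gamma>_def cat_gamma_def cat_all_eq)
  have "q \<le> card {u :: 'p mod_ring. u ^ q = 1}"
    using q_pos assms by (intro card_roots_of_unity_ge) auto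
  with \<gamma>(3) have "\<forall>e\<in>set \<gamma>. e < card {u :: 'p mod_ring. u ^ q = 1}"
    by auto
  then obtain \<rho> :: "'p mod_ring list"
    where \<rho>: "length \<rho> = length \<gamma>" "set \<rho> \<subseteq> {u. u ^ q = 1}" "det (vmat \<rho> \<gamma>) \<noteq> 0"
    using exists_vmat_det_nonzero[OF \<gamma>(1)] by blast
  have roots: "\<forall>r\<in>set \<rho>. r ^ q = 1"
    using \<rho>(2) by auto
  have "invertible_mat (vmat \<rho> \<gamma>)"
    using \<rho>(1,3) by (intro invertible_mat_if_det_nonzero) (auto simp: vmat_def)
  moreover have "distinct \<rho>"
    using \<rho>(1,3) by (rule distinct_if_det_vmat_nonzero)
  moreover have "all_TxT_invertible T (vmat \<rho> alpha_s)"
    using \<open>distinct \<rho>\<close> roots q_pos coprime_x_cat_q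
    by (intro all_TxT_invertible_vmat_progression[where e = "K * y" and g = x])
      (auto simp: cat_alpha_s_def cong_def)
  moreover have "all_TxT_invertible T (vmat \<rho> beta_s)"
    using \<open>distinct \<rho>\<close> roots q_pos coprime_y_q beta_s_progression
    by (intro all_TxT_invertible_vmat_progression[where e = "nat ((- int x) mod int q)"
          and g = y])
      (simp_all add: cat_beta_s_def)
  ultimately show ?thesis
    unfolding cat_cond_IV_def \<gamma>_def[symmetric] using \<rho>(1) \<gamma>(2) roots
    by (intro exI[of _ \<rho>]) simp
qed

end

theorem theorem2:
  fixes K L T x :: nat
  assumes "L \<le> K" and "T \<le> L" and "2 \<le> T"
    and "0 < x" and "coprime x (cat_q K L T)"
    and "cat_q K L T dvd CARD('p::prime_card) - 1"
  defines "N \<equiv> (K + 1) * (L + 1) + (T - 1)^2 + cat_kappa K T + cat_lambda L T"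
  shows "cat_cond_I_III (cat_q K L T) (cat_alpha_p K L T x) (cat_alpha_s K L T x)
            (cat_beta_p K L T x) (cat_beta_s K L T x) K L T N
       \<and> cat_cond_IV TYPE('p mod_ring) (cat_q K L T) (cat_alpha_p K L T x) (cat_alpha_s K L T x)
            (cat_beta_p K L T x) (cat_beta_s K L T x) T N"
proof -
  interpret cat_construction K L T x
    using assms(1-3,5) by unfold_locales
  show ?thesis
    unfolding N_def using cat_cond_I_III_holds cat_cond_IV_holds[OF assms(6)] by blast
qed

end
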